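(* Let $p$ be a prime, $V$ a $4$-dimensional vector space over $\mathbb{F}_p$, $G=GL(V)$, and for $r=1,2,3$ let $\mathcal{L}_r$ be the set of $r$-dimensional subspaces of $V$. Let $\eta:\mathbb{Z}\mathcal{L}_2\to\mathbb{Z}\mathcal{L}_2$ be the $\mathbb{Z}$-linear map with $\eta(x)=\sum_{y\in\mathcal{L}_2,\ y\cap x=\{0\}} y$ for $x\in\mathcal{L}_2$; let $\phi:\mathbb{Z}\mathcal{L}_1\to\mathbb{Z}\mathcal{L}_2$ be given by $\phi(x)=\sum_{y\in\mathcal{L}_2,\ x\cap y=\{0\}}y$ for $x\in\mathcal{L}_1$; and let $\psi:\mathbb{Z}\mathcal{L}_3\to\mathbb{Z}\mathcal{L}_2$ be given by $\psi(x)=\sum_{y\in\mathcal{L}_2,\ x\cap y\neq y}y$ for $x\in\mathcal{L}_3$. Denote by $\overline{\eta},\overline{\phi},\overline{\psi}$ the induced maps on the corresponding $\mathbb{F}_p$-permutation modules $\mathbb{F}_p\mathcal{L}_r$. For $i\ge 0$ let $M_i=\{m\in\mathbb{Z}\mathcal{L}_2 : \eta(m)\in p^i\mathbb{Z}\mathcal{L}_2\}$ and let $\overline{M_i}=(M_i+p\mathbb{Z}\mathcal{L}_2)/p\mathbb{Z}\mathcal{L}_2\subseteq\mathbb{F}_p\mathcal{L}_2$. Let $\mathbf{1}=\sum_{x\in\mathcal{L}_2}x\in\mathbb{F}_p\mathcal{L}_2$. Then: (1) $\ker\overline{\eta}\subseteq\overline{M_1}$; (2) $\mathbb{F}_p\mathbf{1}\oplus(\operatorname{im}\overline{\phi}+\operatorname{im}\overline{\psi})\subseteq\overline{M_2}$;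 (3) $\mathbb{F}_p\mathbf{1}\oplus\operatorname{im}\overline{\eta}\subseteq\overline{M_3}$; (4) $\mathbb{F}_p\mathbf{1}\subseteq\overline{M_4}$.
   Context: $\mathbb{Z}\mathcal{L}_r$ and $\mathbb{F}_p\mathcal{L}_r$ denote the free $\mathbb{Z}$-module and the $\mathbb{F}_p$-vector space with basis $\mathcal{L}_r$; reduction mod $p$ gives $\mathbb{F}_p\mathcal{L}_r=\mathbb{Z}\mathcal{L}_r/p\mathbb{Z}\mathcal{L}_r$. The direct sums are inside $\mathbb{F}_p\mathcal{L}_2=\mathbb{F}_p\mathbf{1}\oplus Y_2$, where $Y_2$ is the subspace of vectors whose coefficients sum to $0$ (the images of $\overline{\eta},\overline{\phi},\overline{\psi}$ lie in $Y_2$). *)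

theory Defs
  imports "HOL-Analysis.Analysis"
begin

text \<open>V = F_p^4 is modelled as the type 'k^4 for a field 'k with CARD('k) = p prime
 (any field with p elements is F_p, and any 4-dimensional F_p-space is isomorphic to F_p^4).\<close>

definition Lr :: "nat \<Rightarrow> ('k::field^4) set set" where
  "Lr r = {W. vec.subspace W \<and> vec.dim W = r}"

text \<open>Elements of R L_r (R = int or the field 'k): coefficient functions supported on L_r.\<close>
definition RL :: "nat \<Rightarrow> (('k::field^4) set \<Rightarrow> 'r::comm_ring_1) set" where
  "RL r = {m. \<forall>x. x \<notin> Lr r \<longrightarrow> m x = 0}"

definition eta :: "(('k::field^4) set \<Rightarrow> 'r::comm_ring_1) \<Rightarrow> ('k^4) set \<Rightarrow> 'r" where
  "eta m y = (if y \<in> Lr 2 then (\<Sum>x\<in>{x\<in>Lr 2. x \<inter> y = {0}}. m x) else 0)"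

definition phi :: "(('k::field^4) set \<Rightarrow> 'r::comm_ring_1) \<Rightarrow> ('k^4) set \<Rightarrow> 'r" where
  "phi m y = (if y \<in> Lr 2 then (\<Sum>x\<in>{x\<in>Lr 1. x \<inter> y = {0}}. m x) else 0)"

definition psi :: "(('k::field^4) set \<Rightarrow> 'r::comm_ring_1) \<Rightarrow> ('k^4) set \<Rightarrow> 'r" where
  "psi m y = (if y \<in> Lr 2 then (\<Sum>x\<in>{x\<in>Lr 3. x \<inter> y \<noteq> y}. m x) else 0)"

definition M :: "nat \<Rightarrow> nat \<Rightarrow> (('k::field^4) set \<Rightarrow> int) set" where
  "M p i = {m \<in> RL 2. \<forall>y. (int p) ^ i dvd eta m y}"

definition redp :: "(('k::field^4) set \<Rightarrow> int) \<Rightarrow> ('k^4) set \<Rightarrow> 'k" where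
  "redp m = (\<lambda>x. of_int (m x))"

definition Mbar :: "nat \<Rightarrow> nat \<Rightarrow> (('k::field^4) set \<Rightarrow> 'k) set" where
  "Mbar p i = redp ` M p i"

definition one :: "('k::field^4) set \<Rightarrow> 'k" where
  "one x = (if x \<in> Lr 2 then 1 else 0)"

definition line_one :: "(('k::field^4) set \<Rightarrow> 'k) set" where
  "line_one = {(\<lambda>x. c * one x) | c. True}"

definition setsum :: "(('k::field^4) set \<Rightarrow> 'k) set \<Rightarrow> (('k^4) set \<Rightarrow> 'k) set \<Rightarrow> (('k^4) set \<Rightarrow> 'k) set" where
  "setsum A B = {(\<lambda>x. a x + b x) | a b. a \<in> A \<and> b \<in> B}"

definition ker_etabar :: "(('k::field^4) set \<Rightarrow> 'k) set" where
  "ker_etabar = {v \<in> RL 2. \<forall>y. eta v y = 0}"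

definition im_etabar :: "(('k::field^4) set \<Rightarrow> 'k) set" where
  "im_etabar = eta ` RL 2"

definition im_phibar :: "(('k::field^4) set \<Rightarrow> 'k) set" where
  "im_phibar = phi ` RL 1"

definition im_psibar :: "(('k::field^4) set \<Rightarrow> 'k) set" where
  "im_psibar = psi ` RL 3"

end

theory Submission
  imports Defs
begin

text \<open>
  Let \<open>q\<close> be the size of the field (eventually \<open>q = p\<close>). Everything reduces to counting planes of \<open>F\<^sub>q\<^sup>4\<close>
  subject to incidence conditions, which is done by counting their ordered bases, \<open>(q\<^sup>2 - 1)(q\<^sup>2 - q)\<close>
  per plane.

  The coefficient sum is a linear form sending \<open>\<one>\<close> to \<open>|\<L>\<^sub>2| = (q\<^sup>2 + 1)(q\<^sup>2 + q + 1) \<equiv> 1\<close> and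
  vanishing on the images of \<open>\<phi>\<close>, \<open>\<psi>\<close>, \<open>\<eta>\<close>: a line is disjoint from, a hyperplane fails to contain,
  and a plane is disjoint from \<open>q\<^sup>2(q\<^sup>2 + q + 1)\<close>, \<open>q\<^sup>2(q\<^sup>2 + q + 1)\<close> and \<open>q\<^sup>4\<close> planes respectively.
  This gives the direct sums.

  For the containments, lift to \<open>\<int>\<close>. Then \<open>\<eta>(\<one>) = q\<^sup>4\<one>\<close>; the entries of \<open>\<eta>\<phi>\<close> and \<open>\<eta>\<psi>\<close> are
  \<open>q\<^sup>4\<close> or \<open>q\<^sup>4 - q\<^sup>2\<close>; and modulo \<open>q\<^sup>3\<close> the matrix of \<open>\<eta>\<^sup>2\<close> is \<open>K\<close> times that of \<open>\<eta>\<close> with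
  \<open>K = q(q - 1)(q\<^sup>2 - 1) \<equiv> 0\<close>, so \<open>\<eta>(v) - K v\<close> is a lift of \<open>\<eta>(v)\<close> lying in \<open>M\<^sub>3\<close>.
\<close>

section \<open>Vector spaces over a finite field\<close>

lemma (in vector_space) card_span_independent:
  assumes "finite (UNIV :: 'a set)" "independent B" "finite B"
  shows "card (span B) = CARD('a) ^ card B"
  using assms(3,2)
proof (induction B rule: finite_induct)
  case (insert a B)
  then have indep: "independent B" and a: "a \<notin> span B"
    using independent_insert by auto
  have span_eq: "span (insert a B) = (\<lambda>(c, s). c *s a + s) ` (UNIV \<times> span B)"
  proof (intro set_eqI iffI)
    fix x assume "x \<in> span (insert a B)"
    then obtain k where "x - k *s a \<in> span B"
      by (auto simp: span_breakdown_eq)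
    then show "x \<in> (\<lambda>(c, s). c *s a + s) ` (UNIV \<times> span B)"
      by (intro image_eqI[where x = "(k, x - k *s a)"]) auto
  next
    fix x assume "x \<in> (\<lambda>(c, s). c *s a + s) ` (UNIV \<times> span B)"
    then obtain c s where "s \<in> span B" "x = c *s a + s" by auto
    then show "x \<in> span (insert a B)"
      by (auto simp: span_breakdown_eq intro!: exI[of _ c])
  qed
  have "inj_on (\<lambda>(c, s). c *s a + s) (UNIV \<times> span B)"
  proof (rule inj_onI, clarsimp)
    fix c s c' s'
    assume s: "s \<in> span B" "s' \<in> span B" and eq: "c *s a + s = c' *s a + s'"
    have "(c - c') *s a = s' - s"
      using eq by (simp add: scale_left_diff_distrib algebra_simps)
    then have "(c - c') *s a \<in> span B"
      using s span_diff by metis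
    then have "c = c'"
      using a span_scale[of _ B "inverse (c - c')"] by (metis scale_scale scale_one left_inverse right_minus_eq)
    with eq show "c = c' \<and> s = s'" by simp
  qed
  then have "card (span (insert a B)) = CARD('a) * card (span B)"
    by (simp add: span_eq card_image card_cartesian_product)
  with insert indep show ?case by simp
qed simp

context finite_dimensional_vector_space
begin

lemma card_subspace:
  assumes "finite (UNIV :: 'a set)" "subspace W"
  shows "card W = CARD('a) ^ dim W"
proof -
  obtain B where "B \<subseteq> W" "independent B" "W \<subseteq> span B" "card B = dim W"
    using basis_exists by blast
  moreover from this have "span B = W"
    using assms(2) span_minimal by blast
  ultimately show ?thesis
    using card_span_independent[OF assms(1)] finiteI_independent by metis
qed

lemma finite_vectors:
  assumes "finite (UNIV :: 'a set)"
  shows "finite (S :: 'b set)"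
proof -
  have "card (UNIV :: 'b set) \<noteq> 0"
    using card_subspace[OF assms subspace_UNIV] assms by simp
  then show ?thesis
    using card.infinite finite_subset[OF subset_UNIV] by metis
qed

lemma int_card_subspace_diff:
  assumes "finite (UNIV :: 'a set)" "subspace W" "subspace Z" "W \<subseteq> Z"
  shows "int (card (Z - W)) = int CARD('a) ^ dim Z - int CARD('a) ^ dim W"
proof -
  have "card W \<le> card Z"
    by (rule card_mono[OF finite_vectors[OF assms(1)] assms(4)])
  then show ?thesis
    using assms card_subspace[OF assms(1)] finite_vectors[OF assms(1)]
    by (simp add: card_Diff_subset of_nat_diff)
qed

lemma int_card_subspace_Un:
  assumes "finite (UNIV :: 'a set)" "subspace A" "subspace B"
  shows "int (card (A \<union> B)) = int CARD('a) ^ dim A + int CARD('a) ^ dim B - int CARD('a) ^ dim (A \<inter> B)"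
proof -
  have "card (A \<union> B) + card (A \<inter> B) = card A + card B"
    using card_Un_Int finite_vectors[OF assms(1)] by metis
  then show ?thesis
    using card_subspace[OF assms(1)] assms(2,3) subspace_inter[OF assms(2,3)]
    by (metis (no_types, lifting) add_diff_cancel_right' of_nat_add of_nat_power)
qed

lemma dim_insert_notin_subspace:
  assumes "subspace W" "u \<notin> W"
  shows "dim (insert u W) = dim W + 1"
  using assms by (simp add: dim_insert span_eq_iff[THEN iffD2])

lemma dim_span_Un_Int:
  assumes "subspace A" "subspace B"
  shows "dim (span (A \<union> B)) + dim (A \<inter> B) = dim A + dim B"
  using dim_sums_Int[OF assms] assms by (simp add: span_Un span_eq_iff[THEN iffD2])

lemma span_insert_hyperplane:
  assumes "subspace A" "dim A + 1 = dimension" "u \<notin> A"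
  shows "span (insert u A) = UNIV"
  using assms dim_eq_full[of "insert u A"] by (simp add: dim_insert_notin_subspace)

lemma dim_Int_hyperplane:
  assumes "subspace A" "dim A + 1 = dimension" "subspace B" "\<not> B \<subseteq> A"
  shows "dim (A \<inter> B) + 1 = dim B"
proof -
  have "span A = A"
    using assms(1) by (simp add: span_eq_iff)
  have "span A \<subset> span (A \<union> B)"
  proof
    show "span A \<subseteq> span (A \<union> B)" by (rule span_mono) auto
    show "span A \<noteq> span (A \<union> B)"
      using \<open>span A = A\<close> assms(4) span_superset[of "A \<union> B"] by blast
  qed
  then have "dim (span (A \<union> B)) = dimension"
    using dim_psubset[of A "A \<union> B"] dim_subset_UNIV[of "A \<union> B"] assms(2) by simp
  then show ?thesis
    using dim_span_Un_Int[OF assms(1,3)] assms(2) by simp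
qed

end

section \<open>Counting planes of \<open>F\<^sub>q\<^sup>4\<close>\<close>

lemma int_card_Sigma_const:
  assumes "finite U" "\<And>u. u \<in> U \<Longrightarrow> finite (V u) \<and> int (card (V u)) = c"
  shows "int (card (Sigma U V)) = int (card U) * c"
proof -
  have "int (card (Sigma U V)) = (\<Sum>u\<in>U. int (card (V u)))"
    using assms by simp
  also have "\<dots> = (\<Sum>u\<in>U. c)"
    using assms(2) by (intro sum.cong) auto
  finally show ?thesis by simp
qed

lemma int_card_filter_split:
  assumes "finite A"
  shows "int (card {y \<in> A. P y}) = int (card {y \<in> A. P y \<and> R y}) + int (card {y \<in> A. P y \<and> \<not> R y})"
proof -
  have "{y \<in> A. P y} = {y \<in> A. P y \<and> R y} \<union> {y \<in> A. P y \<and> \<not> R y}" by auto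
  then show ?thesis
    using assms by (simp add: card_Un_disjoint disjoint_iff)
qed

lemma sum_incidence_swap:
  fixes m :: "'a \<Rightarrow> 'r::comm_semiring_1"
  assumes "finite A" "finite B"
  shows "(\<Sum>y\<in>B. \<Sum>x\<in>{x \<in> A. R x y}. m x) = (\<Sum>x\<in>A. m x * of_nat (card {y \<in> B. R x y}))"
  using sum.swap_restrict[OF assms, of "\<lambda>x y. m x" R] by (simp add: mult.commute)

lemma vec_dim_UNIV_4: "vec.dim (UNIV :: ('k::field^4) set) = 4"
  by (simp add: card_cart_basis)

definition indep_pairs :: "(('k::field^4) \<times> ('k^4)) set" where
  "indep_pairs = {(u, v). u \<noteq> 0 \<and> v \<notin> vec.span {u}}"

lemma span_indep_pair_in_Lr2:
  assumes "(u, v) \<in> indep_pairs"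
  shows "vec.span {u, v} \<in> Lr 2"
proof -
  have "{u, v} = insert v {u}" by auto
  with assms show ?thesis
    by (simp add: indep_pairs_def Lr_def vec.dim_insert)
qed

lemma span_indep_pair_eq:
  assumes "y \<in> Lr 2" "u \<in> y" "v \<in> y" "(u, v) \<in> indep_pairs"
  shows "vec.span {u, v} = y"
  using assms span_indep_pair_in_Lr2[OF assms(4)]
  by (intro vec.subspace_dim_equal vec.span_minimal) (auto simp: Lr_def)

lemma span_pair_subset_iff:
  assumes "vec.subspace h"
  shows "vec.span {u, v} \<subseteq> h \<longleftrightarrow> u \<in> h \<and> v \<in> h"
  using assms vec.span_minimal[of "{u, v}" h] vec.span_base[of _ "{u, v}"] by auto

lemma indep_pair_span_avoids_iff:
  assumes z: "vec.subspace z"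
  shows "(u, v) \<in> indep_pairs \<and> vec.span {u, v} \<inter> z = {0} \<longleftrightarrow> u \<notin> z \<and> v \<notin> vec.span (insert u z)"
proof
  assume a: "(u, v) \<in> indep_pairs \<and> vec.span {u, v} \<inter> z = {0}"
  then have "u \<noteq> 0" "v \<notin> vec.span {u}" by (auto simp: indep_pairs_def)
  then have "u \<notin> z" using a vec.span_base[of u "{u, v}"] by auto
  moreover have "v \<notin> vec.span (insert u z)"
  proof
    assume "v \<in> vec.span (insert u z)"
    then obtain k where "v - k *s u \<in> z"
      using z by (auto simp: vec.span_breakdown_eq vec.span_eq_iff[THEN iffD2])
    moreover have "v - k *s u \<in> vec.span {u, v}"
      by (intro vec.span_diff vec.span_scale) (auto simp: vec.span_base)
    ultimately have "v - k *s u = 0" using a by blast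
    then have "v = k *s u" by simp
    then show False using \<open>v \<notin> vec.span {u}\<close> by (auto simp: vec.span_singleton)
  qed
  ultimately show "u \<notin> z \<and> v \<notin> vec.span (insert u z)" by blast
next
  assume a: "u \<notin> z \<and> v \<notin> vec.span (insert u z)"
  have "u \<noteq> 0" using a vec.subspace_0[OF z] by auto
  moreover have "v \<notin> vec.span {u}"
    using a vec.span_mono[of "{u}" "insert u z"] by auto
  moreover have "w = 0" if w: "w \<in> vec.span {u, v}" "w \<in> z" for w
  proof -
    obtain a b where ab: "w - b *s v = a *s u"
      using w(1) by (auto simp: vec.span_breakdown_eq vec.span_singleton insert_commute[of u v])
    have "b = 0"
    proof (rule ccontr)
      assume "b \<noteq> 0"
      then have "v = inverse b *s (w - a *s u)" using ab by (simp add: algebra_simps)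
      moreover have "inverse b *s (w - a *s u) \<in> vec.span (insert u z)"
        using w by (intro vec.span_scale vec.span_diff) (auto simp: vec.span_base)
      ultimately show False using a by simp
    qed
    then have "a *s u \<in> z" using ab w by simp
    then have "a = 0"
      using a vec.subspace_scale[OF z, of "a *s u" "inverse a"] by (cases "a = 0") auto
    then show ?thesis using ab \<open>b = 0\<close> by simp
  qed
  ultimately show "(u, v) \<in> indep_pairs \<and> vec.span {u, v} \<inter> z = {0}"
    using vec.subspace_0[OF z] vec.span_zero by (auto simp: indep_pairs_def)
qed

lemma line_eq_span:
  assumes "x \<in> Lr 1" "u \<in> x" "u \<noteq> 0"
  shows "vec.span {u} = x"
  using assms by (intro vec.subspace_dim_equal vec.span_minimal) (auto simp: Lr_def)

lemma line_Int_eq_0_iff: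
  assumes "x \<in> Lr 1" "vec.subspace y"
  shows "x \<inter> y = {0} \<longleftrightarrow> \<not> x \<subseteq> y"
proof
  assume "x \<inter> y = {0}"
  moreover have "\<not> x \<subseteq> {0}" using assms(1) vec.dim_eq_0[of x] by (simp add: Lr_def)
  ultimately show "\<not> x \<subseteq> y" by auto
next
  assume "\<not> x \<subseteq> y"
  then have "w = 0" if "w \<in> x" "w \<in> y" for w
    using that assms line_eq_span[OF assms(1), of w] vec.span_minimal[of "{w}" y] by auto
  then show "x \<inter> y = {0}"
    using assms vec.subspace_0 by (auto simp: Lr_def)
qed

context
  assumes finite_scalars: "finite (UNIV :: 'k::field set)"
begin

lemma finite_vec_set [simp]: "finite (S :: ('k^'n) set)"
  by (rule vec.finite_vectors[OF finite_scalars])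

lemma finite_vec_pair_set [simp]: "finite (S :: (('k^'n) \<times> ('k^'n)) set)"
  using finite_cartesian_product[OF finite_vec_set finite_vec_set]
  by (rule finite_subset[rotated]) auto

lemma finite_Lr [simp]: "finite (Lr r :: ('k^4) set set)"
  using finite_Pow_iff[THEN iffD2, OF finite_vec_set[of UNIV]]
  by (rule finite_subset[rotated]) auto

lemma int_card_vec_subspace:
  "vec.subspace (W :: ('k^'n) set) \<Longrightarrow> int (card W) = int CARD('k) ^ vec.dim W"
  by (simp add: vec.card_subspace[OF finite_scalars])

lemma int_card_vec_subspace_diff:
  "vec.subspace (W :: ('k^'n) set) \<Longrightarrow> vec.subspace Z \<Longrightarrow> W \<subseteq> Z
    \<Longrightarrow> int (card (Z - W)) = int CARD('k) ^ vec.dim Z - int CARD('k) ^ vec.dim W"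
  by (rule vec.int_card_subspace_diff[OF finite_scalars])

lemma int_card_vec_compl: "int (card (UNIV - (X :: ('k^'n) set))) = int CARD('k) ^ CARD('n) - int (card X)"
  using card_mono[OF finite_vec_set subset_UNIV, of X] by (simp add: card_Diff_subset of_nat_diff)

lemma card_scalars_ge_2: "int CARD('k) \<ge> 2"
proof -
  have "card {0 :: 'k, 1} \<le> CARD('k)"
    using finite_scalars by (intro card_mono) auto
  then show ?thesis by simp
qed

lemma int_card_bases_first_in:
  assumes y: "(y :: ('k^4) set) \<in> Lr 2"
  shows "int (card {(u, v) \<in> indep_pairs. u \<in> S \<and> vec.span {u, v} = y})
       = int (card (y \<inter> S - {0})) * (int CARD('k) ^ 2 - int CARD('k))"
proof -
  have sy: "vec.subspace y" "vec.dim y = 2" using y by (auto simp: Lr_def)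
  have "{(u, v) \<in> indep_pairs. u \<in> S \<and> vec.span {u, v} = y}
      = Sigma (y \<inter> S - {0}) (\<lambda>u. y - vec.span {u})"
  proof (rule set_eqI, clarify)
    fix u v
    have "(u, v) \<in> indep_pairs \<and> u \<in> S \<and> vec.span {u, v} = y
        \<longleftrightarrow> u \<in> y \<inter> S - {0} \<and> v \<in> y - vec.span {u}"
      using span_indep_pair_eq[OF y, of u v] by (auto simp: indep_pairs_def vec.span_base)
    then show "(u, v) \<in> {(u, v) \<in> indep_pairs. u \<in> S \<and> vec.span {u, v} = y}
        \<longleftrightarrow> (u, v) \<in> Sigma (y \<inter> S - {0}) (\<lambda>u. y - vec.span {u})"
      by simp
  qed
  moreover have "int (card (y - vec.span {u})) = int CARD('k) ^ 2 - int CARD('k)"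
    if "u \<in> y" "u \<noteq> 0" for u
    using that sy int_card_vec_subspace_diff[of "vec.span {u}" y] vec.span_minimal[of "{u}" y] by simp
  ultimately show ?thesis
    by (simp add: int_card_Sigma_const)
qed

lemma int_card_pairs_spanning:
  assumes "\<And>y :: ('k^4) set. y \<in> Lr 2 \<Longrightarrow> P y \<Longrightarrow> int (card (y \<inter> S - {0})) = c"
  shows "int (card {(u, v) \<in> indep_pairs. u \<in> S \<and> P (vec.span {u, v})})
       = int (card {y \<in> Lr 2. P y}) * c * (int CARD('k) ^ 2 - int CARD('k))"
proof -
  have eq: "{(u, v) \<in> indep_pairs. u \<in> S \<and> P (vec.span {u, v})}
      = (\<Union>y\<in>{y \<in> Lr 2. P y}. {(u, v) \<in> indep_pairs. u \<in> S \<and> vec.span {u, v} = y})"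
    using span_indep_pair_in_Lr2 by auto
  have "card {(u, v) \<in> indep_pairs. u \<in> S \<and> P (vec.span {u, v})}
      = (\<Sum>y\<in>{y \<in> Lr 2. P y}. card {(u, v) \<in> indep_pairs. u \<in> S \<and> vec.span {u, v} = y})"
    unfolding eq by (rule card_UN_disjoint) auto
  then have "int (card {(u, v) \<in> indep_pairs. u \<in> S \<and> P (vec.span {u, v})})
      = (\<Sum>y\<in>{y \<in> Lr 2. P y}. c * (int CARD('k) ^ 2 - int CARD('k)))"
    using assms by (simp add: int_card_bases_first_in)
  then show ?thesis by simp
qed

lemma int_card_plane_nonzero:
  "(y :: ('k^4) set) \<in> Lr 2 \<Longrightarrow> int (card (y \<inter> UNIV - {0})) = int CARD('k) ^ 2 - 1"
  using int_card_vec_subspace_diff[of "{0}" y] vec.subspace_0[of y] by (simp add: Lr_def)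

lemma count_planes_by_bases:
  assumes "\<And>y :: ('k^4) set. y \<in> Lr 2 \<Longrightarrow> P y \<Longrightarrow> int (card (y \<inter> S - {0})) = c"
    and "{(u, v) \<in> indep_pairs. u \<in> S \<and> P (vec.span {u, v})} = Sigma U V"
    and "\<And>u. u \<in> U \<Longrightarrow> int (card (V u)) = d"
  shows "int (card {y \<in> Lr 2. P y}) * c * (int CARD('k) ^ 2 - int CARD('k)) = int (card U) * d"
  using int_card_pairs_spanning[of P S c, OF assms(1)] assms(2,3) by (simp add: int_card_Sigma_const)

lemma plane_basis_factors_pos:
  "int CARD('k) - 1 > 0" "int CARD('k) ^ 2 - 1 > 0" "int CARD('k) ^ 2 - int CARD('k) > 0"
proof -
  have "2 * int CARD('k) \<le> int CARD('k) * int CARD('k)"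
    using card_scalars_ge_2 by (intro mult_right_mono) auto
  then show "int CARD('k) - 1 > 0" "int CARD('k) ^ 2 - 1 > 0" "int CARD('k) ^ 2 - int CARD('k) > 0"
    unfolding power2_eq_square using card_scalars_ge_2 by linarith+
qed

lemma card_planes_avoiding:
  assumes z: "vec.subspace (z :: ('k^4) set)"
  shows "int (card {y \<in> Lr 2. y \<inter> z = {0}}) * (int CARD('k) ^ 2 - 1) * (int CARD('k) ^ 2 - int CARD('k))
       = (int CARD('k) ^ 4 - int CARD('k) ^ vec.dim z) * (int CARD('k) ^ 4 - int CARD('k) ^ (vec.dim z + 1))"
proof -
  have "int (card {y \<in> Lr 2. y \<inter> z = {0}}) * (int CARD('k) ^ 2 - 1) * (int CARD('k) ^ 2 - int CARD('k))
      = int (card (UNIV - z)) * (int CARD('k) ^ 4 - int CARD('k) ^ (vec.dim z + 1))"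
  proof (rule count_planes_by_bases)
    show "{(u, v) \<in> indep_pairs. u \<in> UNIV \<and> vec.span {u, v} \<inter> z = {0}}
        = Sigma (UNIV - z) (\<lambda>u. UNIV - vec.span (insert u z))"
      using indep_pair_span_avoids_iff[OF z] by auto
    show "int (card (UNIV - vec.span (insert u z))) = int CARD('k) ^ 4 - int CARD('k) ^ (vec.dim z + 1)"
      if "u \<in> UNIV - z" for u
      using that z int_card_vec_subspace_diff[of "vec.span (insert u z)" UNIV]
      by (simp add: vec.dim_insert_notin_subspace vec_dim_UNIV_4 del: vec.dim_UNIV)
  qed (rule int_card_plane_nonzero)
  moreover have "int (card (UNIV - z)) = int CARD('k) ^ 4 - int CARD('k) ^ vec.dim z"
    using z int_card_vec_subspace_diff[of z UNIV] by (simp add: vec_dim_UNIV_4 del: vec.dim_UNIV)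
  ultimately show ?thesis by simp
qed

lemma card_Lr2: "int (card (Lr 2 :: ('k^4) set set)) = (int CARD('k) ^ 2 + 1) * (int CARD('k) ^ 2 + int CARD('k) + 1)"
proof -
  have "Lr 2 = {y \<in> Lr 2. y \<inter> {0 :: 'k^4} = {0}}"
    by (auto simp: Lr_def vec.subspace_0)
  then have "int (card (Lr 2 :: ('k^4) set set)) * (int CARD('k) ^ 2 - 1) * (int CARD('k) ^ 2 - int CARD('k))
      = ((int CARD('k) ^ 2 + 1) * (int CARD('k) ^ 2 + int CARD('k) + 1)) * (int CARD('k) ^ 2 - 1) * (int CARD('k) ^ 2 - int CARD('k))"
    using card_planes_avoiding[of "{0}"] by (simp add: algebra_simps power_numeral_reduce)
  then show ?thesis
    using plane_basis_factors_pos by simp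
qed

lemma card_planes_disjoint_line:
  assumes "(x :: ('k^4) set) \<in> Lr 1"
  shows "int (card {y \<in> Lr 2. y \<inter> x = {0}}) = int CARD('k) ^ 2 * (int CARD('k) ^ 2 + int CARD('k) + 1)"
proof -
  have "int (card {y \<in> Lr 2. y \<inter> x = {0}}) * (int CARD('k) ^ 2 - 1) * (int CARD('k) ^ 2 - int CARD('k))
      = (int CARD('k) ^ 2 * (int CARD('k) ^ 2 + int CARD('k) + 1)) * (int CARD('k) ^ 2 - 1) * (int CARD('k) ^ 2 - int CARD('k))"
    using card_planes_avoiding[of x] assms by (simp add: Lr_def algebra_simps power_numeral_reduce)
  then show ?thesis
    using plane_basis_factors_pos by simp
qed

lemma card_planes_disjoint_plane:
  assumes "(x :: ('k^4) set) \<in> Lr 2"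
  shows "int (card {y \<in> Lr 2. y \<inter> x = {0}}) = int CARD('k) ^ 4"
proof -
  have "int (card {y \<in> Lr 2. y \<inter> x = {0}}) * (int CARD('k) ^ 2 - 1) * (int CARD('k) ^ 2 - int CARD('k))
      = int CARD('k) ^ 4 * (int CARD('k) ^ 2 - 1) * (int CARD('k) ^ 2 - int CARD('k))"
    using card_planes_avoiding[of x] assms by (simp add: Lr_def algebra_simps power_numeral_reduce)
  then show ?thesis
    using plane_basis_factors_pos by simp
qed

lemma card_planes_in_hyperplane:
  assumes h: "(h :: ('k^4) set) \<in> Lr 3"
  shows "int (card {y \<in> Lr 2. y \<subseteq> h}) = int CARD('k) ^ 2 + int CARD('k) + 1"
proof -
  have sh: "vec.subspace h" "vec.dim h = 3" using h by (auto simp: Lr_def)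
  have "int (card {y \<in> Lr 2. y \<subseteq> h}) * (int CARD('k) ^ 2 - 1) * (int CARD('k) ^ 2 - int CARD('k))
      = int (card (h - {0})) * (int CARD('k) ^ 3 - int CARD('k))"
  proof (rule count_planes_by_bases)
    show "{(u, v) \<in> indep_pairs. u \<in> UNIV \<and> vec.span {u, v} \<subseteq> h} = Sigma (h - {0}) (\<lambda>u. h - vec.span {u})"
      using span_pair_subset_iff[OF sh(1)] by (auto simp: indep_pairs_def)
    show "int (card (h - vec.span {u})) = int CARD('k) ^ 3 - int CARD('k)" if "u \<in> h - {0}" for u
      using that sh int_card_vec_subspace_diff[of "vec.span {u}" h] vec.span_minimal[of "{u}" h] by simp
  qed (rule int_card_plane_nonzero)
  also have "int (card (h - {0})) = int CARD('k) ^ 3 - 1"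
    using sh int_card_vec_subspace_diff[of "{0}" h] vec.subspace_0[OF sh(1)] by simp
  also have "(int CARD('k) ^ 3 - 1) * (int CARD('k) ^ 3 - int CARD('k))
      = (int CARD('k) ^ 2 + int CARD('k) + 1) * (int CARD('k) ^ 2 - 1) * (int CARD('k) ^ 2 - int CARD('k))"
    by algebra
  finally show ?thesis
    using plane_basis_factors_pos by simp
qed

lemma card_planes_not_in_hyperplane:
  assumes "(h :: ('k^4) set) \<in> Lr 3"
  shows "int (card {y \<in> Lr 2. h \<inter> y \<noteq> y}) = int CARD('k) ^ 2 * (int CARD('k) ^ 2 + int CARD('k) + 1)"
proof -
  have "int (card (Lr 2 :: ('k^4) set set)) = int (card {y \<in> Lr 2. y \<subseteq> h}) + int (card {y \<in> Lr 2. h \<inter> y \<noteq> y})"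
    using int_card_filter_split[of "Lr 2" "\<lambda>y. True" "\<lambda>y. y \<subseteq> h"] by (simp add: inf.absorb_iff2)
  then show ?thesis
    using card_Lr2 card_planes_in_hyperplane[OF assms] by (simp add: algebra_simps power2_eq_square)
qed

lemma card_planes_through_line_avoiding:
  assumes x: "(x :: ('k^4) set) \<in> Lr 1" and z: "z \<in> Lr 2"
  shows "int (card {y \<in> Lr 2. x \<subseteq> y \<and> y \<inter> z = {0}}) = (if x \<subseteq> z then 0 else int CARD('k) ^ 2)"
proof (cases "x \<subseteq> z")
  case True
  have "\<not> x \<subseteq> {0}" using x vec.dim_eq_0[of x] by (simp add: Lr_def)
  with True have "{y \<in> Lr 2. x \<subseteq> y \<and> y \<inter> z = {0}} = {}" by blast
  with True show ?thesis by simp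
next
  case False
  have sx: "vec.subspace x" and sz: "vec.subspace z" "vec.dim z = 2"
    using x z by (auto simp: Lr_def)
  have xz: "x \<inter> z = {0}" using line_Int_eq_0_iff[OF x sz(1)] False by simp
  have x0: "int (card (x - {0})) = int CARD('k) - 1"
    using int_card_vec_subspace_diff[of "{0}" x] sx vec.subspace_0[OF sx] x by (simp add: Lr_def)
  have "int (card {y \<in> Lr 2. x \<subseteq> y \<and> y \<inter> z = {0}}) * (int CARD('k) - 1) * (int CARD('k) ^ 2 - int CARD('k))
      = int (card (x - {0})) * (int CARD('k) ^ 4 - int CARD('k) ^ 3)"
  proof (rule count_planes_by_bases)
    show "int (card (y \<inter> x - {0})) = int CARD('k) - 1" if "x \<subseteq> y \<and> y \<inter> z = {0}" for y
      using that x0 by (simp add: Int_absorb1)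
    show "{(u, v) \<in> indep_pairs. u \<in> x \<and> x \<subseteq> vec.span {u, v} \<and> vec.span {u, v} \<inter> z = {0}}
        = Sigma (x - {0}) (\<lambda>u. UNIV - vec.span (insert u z))"
    proof (rule set_eqI, clarify)
      fix u v :: "'k^4"
      have "vec.span {u} \<subseteq> vec.span {u, v}" by (rule vec.span_mono) auto
      then show "(u, v) \<in> {(u, v) \<in> indep_pairs. u \<in> x \<and> x \<subseteq> vec.span {u, v} \<and> vec.span {u, v} \<inter> z = {0}}
          \<longleftrightarrow> (u, v) \<in> Sigma (x - {0}) (\<lambda>u. UNIV - vec.span (insert u z))"
        using indep_pair_span_avoids_iff[OF sz(1), of u v] line_eq_span[OF x, of u] xz
        by (auto simp: indep_pairs_def)
    qed
    show "int (card (UNIV - vec.span (insert u z))) = int CARD('k) ^ 4 - int CARD('k) ^ 3"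
      if "u \<in> x - {0}" for u
    proof -
      have "u \<notin> z" using that xz by auto
      then show ?thesis
        using sz int_card_vec_subspace_diff[of "vec.span (insert u z)" UNIV]
        by (simp add: vec.dim_insert_notin_subspace vec_dim_UNIV_4 del: vec.dim_UNIV)
    qed
  qed
  also have "\<dots> = int CARD('k) ^ 2 * (int CARD('k) - 1) * (int CARD('k) ^ 2 - int CARD('k))"
    unfolding x0 by algebra
  finally show ?thesis
    using plane_basis_factors_pos False by simp
qed

lemma int_card_hyperplane_diff:
  assumes "vec.subspace (h :: ('k^4) set)" "vec.dim h = 3" "vec.subspace W" "\<not> W \<subseteq> h"
  shows "int (card (h - W)) = int CARD('k) ^ 3 - int CARD('k) ^ (vec.dim W - 1)"
proof -
  have "vec.dim (h \<inter> W) + 1 = vec.dim W"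
    using vec.dim_Int_hyperplane[OF assms(1) _ assms(3,4)] assms(2) by (simp add: vec.dimension_def card_cart_basis)
  then have "vec.dim (h \<inter> W) = vec.dim W - 1" by linarith
  moreover have "h - W = h - h \<inter> W" by blast
  ultimately show ?thesis
    using assms int_card_vec_subspace_diff[of "h \<inter> W" h] vec.subspace_inter[of h W] by simp
qed

lemma card_planes_in_hyperplane_avoiding:
  assumes h: "(h :: ('k^4) set) \<in> Lr 3" and z: "z \<in> Lr 2"
  shows "int (card {y \<in> Lr 2. y \<inter> z = {0} \<and> y \<subseteq> h}) = (if z \<subseteq> h then 0 else int CARD('k) ^ 2)"
proof -
  have sh: "vec.subspace h" "vec.dim h = 3" and sz: "vec.subspace z" "vec.dim z = 2"
    using h z by (auto simp: Lr_def)
  have pairs: "{(u, v) \<in> indep_pairs. u \<in> UNIV \<and> vec.span {u, v} \<inter> z = {0} \<and> vec.span {u, v} \<subseteq> h}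
      = Sigma (h - z) (\<lambda>u. h - vec.span (insert u z))"
    using indep_pair_span_avoids_iff[OF sz(1)] span_pair_subset_iff[OF sh(1)] by auto
  have dim_span: "vec.subspace (vec.span (insert u z)) \<and> vec.dim (vec.span (insert u z)) = 3" if "u \<notin> z" for u
    using that sz by (simp add: vec.dim_insert_notin_subspace)
  show ?thesis
  proof (cases "z \<subseteq> h")
    case True
    have "vec.span (insert u z) = h" if "u \<in> h - z" for u
      using that True sh dim_span[of u]
      by (intro vec.subspace_dim_equal vec.span_minimal) auto
    then have "int (card {y \<in> Lr 2. y \<inter> z = {0} \<and> y \<subseteq> h}) * (int CARD('k) ^ 2 - 1) * (int CARD('k) ^ 2 - int CARD('k))
        = int (card (h - z)) * 0"
      by (intro count_planes_by_bases[OF int_card_plane_nonzero pairs]) auto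
    with True show ?thesis
      using plane_basis_factors_pos by simp
  next
    case False
    have U: "int (card (h - z)) = int CARD('k) ^ 3 - int CARD('k)"
      using int_card_hyperplane_diff[OF sh sz(1) False] sz by simp
    have "int (card (h - vec.span (insert u z))) = int CARD('k) ^ 3 - int CARD('k) ^ 2" if "u \<in> h - z" for u
      using int_card_hyperplane_diff[OF sh, of "vec.span (insert u z)"] dim_span[of u] that False
        vec.span_superset[of "insert u z"]
      by auto
    then have "int (card {y \<in> Lr 2. y \<inter> z = {0} \<and> y \<subseteq> h}) * (int CARD('k) ^ 2 - 1) * (int CARD('k) ^ 2 - int CARD('k))
        = int (card (h - z)) * (int CARD('k) ^ 3 - int CARD('k) ^ 2)"
      by (intro count_planes_by_bases[OF int_card_plane_nonzero pairs]) auto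
    also have "\<dots> = int CARD('k) ^ 2 * (int CARD('k) ^ 2 - 1) * (int CARD('k) ^ 2 - int CARD('k))"
      unfolding U by algebra
    finally show ?thesis
      using plane_basis_factors_pos False by simp
  qed
qed

lemma card_planes_avoiding_two_by_bases:
  fixes x z :: "('k^4) set"
  assumes x: "vec.subspace x" and z: "vec.subspace z"
  shows "int (card {y \<in> Lr 2. y \<inter> x = {0} \<and> y \<inter> z = {0}}) * (int CARD('k) ^ 2 - 1) * (int CARD('k) ^ 2 - int CARD('k))
       = (\<Sum>u\<in>UNIV - (x \<union> z). int (card (UNIV - (vec.span (insert u x) \<union> vec.span (insert u z)))))"
proof -
  have "{(u, v) \<in> indep_pairs. u \<in> UNIV \<and> vec.span {u, v} \<inter> x = {0} \<and> vec.span {u, v} \<inter> z = {0}}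
      = Sigma (UNIV - (x \<union> z)) (\<lambda>u. UNIV - (vec.span (insert u x) \<union> vec.span (insert u z)))"
  proof (rule set_eqI, clarify)
    fix u v :: "'k^4"
    have "(u, v) \<in> indep_pairs \<and> vec.span {u, v} \<inter> x = {0} \<and> vec.span {u, v} \<inter> z = {0}
        \<longleftrightarrow> (u \<notin> x \<and> v \<notin> vec.span (insert u x)) \<and> (u \<notin> z \<and> v \<notin> vec.span (insert u z))"
      using indep_pair_span_avoids_iff[OF x, of u v] indep_pair_span_avoids_iff[OF z, of u v] by argo
    then show "(u, v) \<in> {(u, v) \<in> indep_pairs. u \<in> UNIV \<and> vec.span {u, v} \<inter> x = {0} \<and> vec.span {u, v} \<inter> z = {0}}
        \<longleftrightarrow> (u, v) \<in> Sigma (UNIV - (x \<union> z)) (\<lambda>u. UNIV - (vec.span (insert u x) \<union> vec.span (insert u z)))"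
      by (simp only: mem_Collect_eq prod.case mem_Sigma_iff Diff_iff Un_iff UNIV_I simp_thms de_Morgan_disj) argo
  qed
  then show ?thesis
    using int_card_pairs_spanning[where S = UNIV and P = "\<lambda>y. y \<inter> x = {0} \<and> y \<inter> z = {0}"]
      int_card_plane_nonzero
    by simp
qed

lemma dim_Int_two_hyperplanes:
  fixes x z :: "('k^4) set"
  assumes x: "x \<in> Lr 2" and z: "z \<in> Lr 2" and u: "u \<notin> x \<union> z"
    and full: "vec.span (insert u (x \<union> z)) = UNIV"
  shows "vec.dim (vec.span (insert u x) \<inter> vec.span (insert u z)) = 2"
proof -
  let ?A = "vec.span (insert u x)" and ?B = "vec.span (insert u z)"
  have dim: "vec.dim ?A = 3" "vec.dim ?B = 3"
    using x z u by (simp_all add: Lr_def vec.dim_insert_notin_subspace)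
  have "\<not> ?B \<subseteq> ?A"
  proof
    assume "?B \<subseteq> ?A"
    then have "insert u (x \<union> z) \<subseteq> ?A"
      using vec.span_superset[of "insert u x"] vec.span_superset[of "insert u z"] by auto
    then have "UNIV \<subseteq> ?A"
      using full vec.span_minimal[of "insert u (x \<union> z)" ?A] by simp
    then show False
      using dim vec.dim_subset[of UNIV ?A] by (simp add: card_cart_basis)
  qed
  then show ?thesis
    using vec.dim_Int_hyperplane[of ?A ?B] dim by (simp add: vec.dimension_def card_cart_basis)
qed

lemma int_card_compl_two_hyperplanes:
  fixes x z :: "('k^4) set"
  assumes x: "x \<in> Lr 2" and z: "z \<in> Lr 2" and u: "u \<notin> x \<union> z"
    and full: "vec.span (insert u (x \<union> z)) = UNIV"
  shows "int (card (UNIV - (vec.span (insert u x) \<union> vec.span (insert u z))))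
       = int CARD('k) ^ 4 - 2 * int CARD('k) ^ 3 + int CARD('k) ^ 2"
  using x z u int_card_vec_compl[of "vec.span (insert u x) \<union> vec.span (insert u z)"]
    vec.int_card_subspace_Un[OF finite_scalars, of "vec.span (insert u x)" "vec.span (insert u z)"]
    dim_Int_two_hyperplanes[OF x z u full]
  by (simp add: Lr_def vec.dim_insert_notin_subspace)

lemma card_planes_avoiding_disjoint_planes:
  fixes x z :: "('k^4) set"
  assumes x: "x \<in> Lr 2" and z: "z \<in> Lr 2" and xz: "x \<inter> z = {0}"
  shows "int (card {y \<in> Lr 2. y \<inter> x = {0} \<and> y \<inter> z = {0}})
       = int CARD('k) * (int CARD('k) - 1) * (int CARD('k) ^ 2 - 1)"
proof -
  have sx: "vec.subspace x" "vec.dim x = 2" and sz: "vec.subspace z" "vec.dim z = 2"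
    using x z by (auto simp: Lr_def)
  have "vec.dim (x \<union> z) = 4"
    using vec.dim_span_Un_Int[OF sx(1) sz(1)] xz sx sz by simp
  then have "vec.span (x \<union> z) = UNIV"
    using vec.dim_eq_full[of "x \<union> z"] by (simp add: vec.dimension_def card_cart_basis)
  then have full: "vec.span (insert u (x \<union> z)) = UNIV" for u
    using vec.span_mono[of "x \<union> z" "insert u (x \<union> z)"] by auto
  have "int (card (UNIV - (x \<union> z))) = int CARD('k) ^ 4 - 2 * int CARD('k) ^ 2 + 1"
    using int_card_vec_compl[of "x \<union> z"] vec.int_card_subspace_Un[OF finite_scalars sx(1) sz(1)] sx sz xz
    by simp
  moreover have "int (card {y \<in> Lr 2. y \<inter> x = {0} \<and> y \<inter> z = {0}}) * (int CARD('k) ^ 2 - 1) * (int CARD('k) ^ 2 - int CARD('k))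
      = int (card (UNIV - (x \<union> z))) * (int CARD('k) ^ 4 - 2 * int CARD('k) ^ 3 + int CARD('k) ^ 2)"
    using card_planes_avoiding_two_by_bases[OF sx(1) sz(1)] int_card_compl_two_hyperplanes[OF x z _ full]
    by simp
  moreover have "(int CARD('k) ^ 4 - 2 * int CARD('k) ^ 2 + 1) * (int CARD('k) ^ 4 - 2 * int CARD('k) ^ 3 + int CARD('k) ^ 2)
      = (int CARD('k) * (int CARD('k) - 1) * (int CARD('k) ^ 2 - 1)) * (int CARD('k) ^ 2 - 1) * (int CARD('k) ^ 2 - int CARD('k))"
    by algebra
  ultimately show ?thesis
    using plane_basis_factors_pos by simp
qed

lemma card_planes_avoiding_meeting_planes:
  fixes x z :: "('k^4) set"
  assumes x: "x \<in> Lr 2" and z: "z \<in> Lr 2" and xz: "vec.dim (x \<inter> z) = 1"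
  shows "int (card {y \<in> Lr 2. y \<inter> x = {0} \<and> y \<inter> z = {0}}) = int CARD('k) ^ 3 * (int CARD('k) - 1)"
proof -
  have sx: "vec.subspace x" "vec.dim x = 2" and sz: "vec.subspace z" "vec.dim z = 2"
    using x z by (auto simp: Lr_def)
  define T where "T = vec.span (x \<union> z)"
  define V where "V u = UNIV - (vec.span (insert u x) \<union> vec.span (insert u z))" for u
  have sT: "vec.subspace T" "vec.dim T = 3"
    using vec.dim_span_Un_Int[OF sx(1) sz(1)] xz sx sz by (simp_all add: T_def)
  have xzT: "x \<union> z \<subseteq> T"
    unfolding T_def by (rule vec.span_superset)
  have inside: "V u = UNIV - T" if "u \<in> T - (x \<union> z)" for u
  proof -
    have "vec.span (insert u w) = T" if "w \<in> {x, z}" for w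
      using that \<open>u \<in> T - (x \<union> z)\<close> xzT sT sx sz
      by (intro vec.subspace_dim_equal vec.span_minimal) (auto simp: vec.dim_insert_notin_subspace)
    then show ?thesis by (simp add: V_def)
  qed
  have outside: "int (card (V u)) = int CARD('k) ^ 4 - 2 * int CARD('k) ^ 3 + int CARD('k) ^ 2"
    if "u \<notin> T" for u
  proof -
    have "vec.span (insert u (x \<union> z)) = vec.span (insert u T)"
      by (simp add: T_def vec.span_insert vec.span_span)
    also have "\<dots> = UNIV"
      using vec.span_insert_hyperplane[OF sT(1) _ \<open>u \<notin> T\<close>] sT by (simp add: vec.dimension_def card_cart_basis)
    finally show ?thesis
      using int_card_compl_two_hyperplanes[OF x z] \<open>u \<notin> T\<close> xzT by (auto simp: V_def)
  qed
  have "int (card (T - (x \<union> z))) = int (card T) - int (card (x \<union> z))"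
    using card_mono[OF finite_vec_set xzT] by (simp add: card_Diff_subset[OF _ xzT] of_nat_diff)
  then have "int (card (T - (x \<union> z))) = int CARD('k) ^ 3 - (2 * int CARD('k) ^ 2 - int CARD('k))"
    using int_card_vec_subspace[OF sT(1)] vec.int_card_subspace_Un[OF finite_scalars sx(1) sz(1)] sT sx sz xz
    by simp
  moreover have "int (card (UNIV - T)) = int CARD('k) ^ 4 - int CARD('k) ^ 3"
    using int_card_vec_subspace_diff[of T UNIV] sT by (simp add: vec_dim_UNIV_4 del: vec.dim_UNIV)
  moreover have "UNIV - (x \<union> z) = (T - (x \<union> z)) \<union> (UNIV - T)" and "(T - (x \<union> z)) \<inter> (UNIV - T) = {}"
    using xzT by auto
  ultimately have "int (card {y \<in> Lr 2. y \<inter> x = {0} \<and> y \<inter> z = {0}}) * (int CARD('k) ^ 2 - 1) * (int CARD('k) ^ 2 - int CARD('k))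
      = (int CARD('k) ^ 3 - (2 * int CARD('k) ^ 2 - int CARD('k))) * (int CARD('k) ^ 4 - int CARD('k) ^ 3)
        + (int CARD('k) ^ 4 - int CARD('k) ^ 3) * (int CARD('k) ^ 4 - 2 * int CARD('k) ^ 3 + int CARD('k) ^ 2)"
    using card_planes_avoiding_two_by_bases[OF sx(1) sz(1)] inside outside
    by (simp add: V_def[symmetric] sum.union_disjoint)
  also have "\<dots> = (int CARD('k) ^ 3 * (int CARD('k) - 1)) * (int CARD('k) ^ 2 - 1) * (int CARD('k) ^ 2 - int CARD('k))"
    by algebra
  finally show ?thesis
    using plane_basis_factors_pos by simp
qed

lemma card_planes_avoiding_plane_and_line:
  assumes x: "(x :: ('k^4) set) \<in> Lr 1" and z: "z \<in> Lr 2"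
  shows "int (card {y \<in> Lr 2. y \<inter> z = {0} \<and> x \<inter> y = {0}}) = int CARD('k) ^ 4 - (if x \<subseteq> z then 0 else int CARD('k) ^ 2)"
proof -
  have "{y \<in> Lr 2. y \<inter> z = {0} \<and> x \<inter> y = {0}} = {y \<in> Lr 2. y \<inter> z = {0} \<and> \<not> x \<subseteq> y}"
    using line_Int_eq_0_iff[OF x] by (auto simp: Lr_def)
  moreover have "{y \<in> Lr 2. y \<inter> z = {0} \<and> x \<subseteq> y} = {y \<in> Lr 2. x \<subseteq> y \<and> y \<inter> z = {0}}"
    by auto
  ultimately show ?thesis
    using int_card_filter_split[of "Lr 2" "\<lambda>y. y \<inter> z = {0}" "\<lambda>y. x \<subseteq> y"]
      card_planes_disjoint_plane[OF z] card_planes_through_line_avoiding[OF x z]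
    by simp
qed

lemma card_planes_avoiding_plane_off_hyperplane:
  assumes h: "(h :: ('k^4) set) \<in> Lr 3" and z: "z \<in> Lr 2"
  shows "int (card {y \<in> Lr 2. y \<inter> z = {0} \<and> h \<inter> y \<noteq> y}) = int CARD('k) ^ 4 - (if z \<subseteq> h then 0 else int CARD('k) ^ 2)"
proof -
  have "{y \<in> Lr 2. y \<inter> z = {0} \<and> h \<inter> y \<noteq> y} = {y \<in> Lr 2. y \<inter> z = {0} \<and> \<not> y \<subseteq> h}"
    by auto
  then show ?thesis
    using int_card_filter_split[of "Lr 2" "\<lambda>y. y \<inter> z = {0}" "\<lambda>y. y \<subseteq> h"]
      card_planes_disjoint_plane[OF z] card_planes_in_hyperplane_avoiding[OF h z]
    by simp
qed

lemma card_planes_avoiding_two_planes_mod: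
  fixes x z :: "('k^4) set"
  assumes x: "x \<in> Lr 2" and z: "z \<in> Lr 2"
  shows "int CARD('k) ^ 3 dvd int (card {y \<in> Lr 2. y \<inter> z = {0} \<and> x \<inter> y = {0}})
     - int CARD('k) * (int CARD('k) - 1) * (int CARD('k) ^ 2 - 1) * (if x \<inter> z = {0} then 1 else 0)"
proof -
  have sx: "vec.subspace x" "vec.dim x = 2" and sz: "vec.subspace z" "vec.dim z = 2"
    using x z by (auto simp: Lr_def)
  have swap: "{y \<in> Lr 2. y \<inter> z = {0} \<and> x \<inter> y = {0}} = {y \<in> Lr 2. y \<inter> x = {0} \<and> y \<inter> z = {0}}"
    by (auto simp: Int_commute)
  have "vec.dim (x \<inter> z) \<le> 2"
    using vec.dim_subset[of "x \<inter> z" x] sx by simp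
  then consider "vec.dim (x \<inter> z) = 0" | "vec.dim (x \<inter> z) = 1" | "vec.dim (x \<inter> z) = 2"
    by linarith
  then show ?thesis
  proof cases
    case 1
    then have "x \<inter> z = {0}"
      using vec.subspace_0[OF sx(1)] vec.subspace_0[OF sz(1)] by auto
    then show ?thesis
      unfolding swap using card_planes_avoiding_disjoint_planes[OF x z] by simp
  next
    case 2
    then have "x \<inter> z \<noteq> {0}" by (metis vec.dim_eq_0 order_refl zero_neq_one)
    then show ?thesis
      unfolding swap using card_planes_avoiding_meeting_planes[OF x z 2] by simp
  next
    case 3
    have "x \<inter> z = x" "x \<inter> z = z"
      by (rule vec.subspace_dim_equal; use sx sz 3 vec.subspace_inter in auto)+
    then have "x = z" by simp
    moreover have "z \<inter> z \<noteq> {0}"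
      using sz vec.dim_eq_0[of z] by auto
    ultimately show ?thesis
      unfolding swap using card_planes_disjoint_plane[OF z] by (simp add: le_imp_power_dvd)
  qed
qed

lemma sum_incidence_over_planes:
  fixes a :: "('k^4) set \<Rightarrow> 'r::comm_ring_1" and B :: "('k^4) set set"
  assumes "B \<subseteq> Lr 2" "\<And>y. y \<in> Lr 2 \<Longrightarrow> T y = (\<Sum>x\<in>{x \<in> Lr r. R x y}. a x)"
  shows "(\<Sum>y\<in>B. T y) = (\<Sum>x\<in>Lr r. a x * of_nat (card {y \<in> B. R x y}))"
proof -
  have "(\<Sum>y\<in>B. T y) = (\<Sum>y\<in>B. \<Sum>x\<in>{x \<in> Lr r. R x y}. a x)"
    using assms by (intro sum.cong) auto
  also have "\<dots> = (\<Sum>x\<in>Lr r. a x * of_nat (card {y \<in> B. R x y}))"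
    using finite_subset[OF assms(1) finite_Lr] by (simp add: sum_incidence_swap)
  finally show ?thesis .
qed

lemma sum_phi:
  "B \<subseteq> Lr 2 \<Longrightarrow> (\<Sum>y\<in>B. phi a y) = (\<Sum>x\<in>Lr 1. a x * of_nat (card {y \<in> B. x \<inter> y = {0}}))"
  for a :: "('k^4) set \<Rightarrow> 'r::comm_ring_1" and B :: "('k^4) set set"
  by (rule sum_incidence_over_planes) (simp_all add: phi_def)

lemma sum_psi:
  "B \<subseteq> Lr 2 \<Longrightarrow> (\<Sum>y\<in>B. psi a y) = (\<Sum>x\<in>Lr 3. a x * of_nat (card {y \<in> B. x \<inter> y \<noteq> y}))"
  for a :: "('k^4) set \<Rightarrow> 'r::comm_ring_1" and B :: "('k^4) set set"
  by (rule sum_incidence_over_planes) (simp_all add: psi_def)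

lemma sum_eta:
  "B \<subseteq> Lr 2 \<Longrightarrow> (\<Sum>y\<in>B. eta a y) = (\<Sum>x\<in>Lr 2. a x * of_nat (card {y \<in> B. x \<inter> y = {0}}))"
  for a :: "('k^4) set \<Rightarrow> 'r::comm_ring_1" and B :: "('k^4) set set"
  by (rule sum_incidence_over_planes) (simp_all add: eta_def)

end

section \<open>Reduction modulo \<open>p\<close>\<close>

lemma redp_eta: "redp (eta m) = eta (redp m)"
  by (simp add: redp_def eta_def fun_eq_iff)

lemma redp_phi: "redp (phi m) = phi (redp m)"
  by (simp add: redp_def phi_def fun_eq_iff)

lemma redp_psi: "redp (psi m) = psi (redp m)"
  by (simp add: redp_def psi_def fun_eq_iff)

lemma eta_add: "eta (\<lambda>x. f x + g x) y = eta f y + eta g y"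
  by (simp add: eta_def sum.distrib)

lemma eta_diff: "eta (\<lambda>x. f x - g x) y = eta f y - eta g y"
  by (simp add: eta_def sum_subtractf)

lemma eta_cmult: "eta (\<lambda>x. c * f x) y = c * eta f y"
  by (simp add: eta_def sum_distrib_left)

lemma eta_outside: "y \<notin> Lr 2 \<Longrightarrow> eta f y = 0"
  by (simp add: eta_def)

lemma eta_at_plane:
  "z \<in> Lr 2 \<Longrightarrow> eta f z = (\<Sum>y\<in>{y \<in> Lr 2. y \<inter> z = {0}}. f y)"
  by (simp add: eta_def)

definition one_int :: "('k::field^4) set \<Rightarrow> int" where
  "one_int x = (if x \<in> Lr 2 then 1 else 0)"

lemma redp_one_int: "redp one_int = one"
  by (simp add: redp_def one_int_def one_def fun_eq_iff)

lemma Mbar_add: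
  assumes "f \<in> Mbar p i" "g \<in> Mbar p i"
  shows "(\<lambda>x. f x + g x) \<in> Mbar p i"
proof -
  obtain m n where "m \<in> M p i" "n \<in> M p i" "f = redp m" "g = redp n"
    using assms by (auto simp: Mbar_def)
  then have "(\<lambda>x. m x + n x) \<in> M p i" "(\<lambda>x. f x + g x) = redp (\<lambda>x. m x + n x)"
    by (auto simp: M_def RL_def eta_add redp_def)
  then show ?thesis
    by (simp add: Mbar_def)
qed

lemma setsum_subset_Mbar:
  "A \<subseteq> Mbar p i \<Longrightarrow> B \<subseteq> Mbar p i \<Longrightarrow> setsum A B \<subseteq> Mbar p i"
  by (auto simp: setsum_def intro: Mbar_add)

text \<open>\<open>0\<close> is represented by \<open>0\<close>, so that lifting preserves supports.\<close>

definition int_lift :: "'a::ring_1 \<Rightarrow> int" where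
  "int_lift c = (if c = 0 then 0 else (SOME i. of_int i = c))"

context
  fixes p :: nat
  assumes prime_p: "prime p" and card_p: "CARD('k::field) = p"
begin

lemma finite_prime_field: "finite (UNIV :: 'k set)"
  using card_p prime_gt_0_nat[OF prime_p] card.infinite by fastforce

lemma CHAR_prime_field: "CHAR('k) = p"
proof -
  have "(\<Sum>x\<in>(UNIV :: 'k set). x + 1) = (\<Sum>x\<in>UNIV. x)"
    by (rule sum.reindex_bij_witness[of _ "\<lambda>x. x - 1" "\<lambda>x. x + 1"]) auto
  then have "of_nat p = (0 :: 'k)"
    using card_p by (simp add: sum.distrib)
  then have "CHAR('k) dvd p"
    by (simp add: of_nat_eq_0_iff_char_dvd)
  then show ?thesis
    using prime_p CHAR_not_1 by (metis One_nat_def prime_nat_iff)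
qed

lemma of_int_eq_0_iff_dvd: "(of_int z :: 'k) = 0 \<longleftrightarrow> int p dvd z"
  by (simp add: of_int_eq_0_iff_char_dvd CHAR_prime_field)

lemma of_nat_eq_0_iff_dvd: "(of_nat n :: 'k) = 0 \<longleftrightarrow> p dvd n"
  by (simp add: of_nat_eq_0_iff_char_dvd CHAR_prime_field)

lemma of_nat_eq_0_if_multiple:
  assumes "int n = int p * c"
  shows "(of_nat n :: 'k) = 0"
proof -
  have "(of_nat n :: 'k) = of_int (int p * c)"
    by (metis assms of_int_of_nat_eq)
  then show ?thesis
    using of_int_eq_0_iff_dvd[of "int p * c"] by simp
qed

lemma eta_one_int: "(z :: ('k^4) set) \<in> Lr 2 \<Longrightarrow> eta one_int z = int p ^ 4"
  using card_planes_disjoint_plane[OF finite_prime_field] card_p by (simp add: eta_def one_int_def)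

lemma of_int_surj: "\<exists>i. (of_int i :: 'k) = c"
proof -
  have "inj_on (\<lambda>i. of_nat i :: 'k) {..<p}"
  proof (rule inj_onI)
    fix i j assume ij: "i \<in> {..<p}" "j \<in> {..<p}" and "(of_nat i :: 'k) = of_nat j"
    then have "(of_int (int i - int j) :: 'k) = 0" by simp
    then have dvd: "int p dvd int i - int j" by (simp only: of_int_eq_0_iff_dvd)
    show "i = j"
    proof (rule ccontr)
      assume "i \<noteq> j"
      then have "\<bar>int p\<bar> \<le> \<bar>int i - int j\<bar>" using dvd_imp_le_int[OF _ dvd] by simp
      with ij show False by auto
    qed
  qed
  then have "(\<lambda>i. of_nat i :: 'k) ` {..<p} = UNIV"
    using card_p finite_prime_field by (simp add: card_image card_subset_eq)
  then show ?thesis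
    by (metis UNIV_I imageE of_int_of_nat_eq)
qed

lemma of_int_int_lift [simp]: "(of_int (int_lift c) :: 'k) = c"
  using someI_ex[OF of_int_surj[of c]] by (simp add: int_lift_def)

lemma redp_int_lift: "redp (\<lambda>x. int_lift (m x)) = (m :: ('k^4) set \<Rightarrow> 'k)"
  by (simp add: redp_def)

lemma int_lift_RL: "(m :: ('k^4) set \<Rightarrow> 'k) \<in> RL r \<Longrightarrow> (\<lambda>x. int_lift (m x)) \<in> RL r"
  by (simp add: RL_def int_lift_def)

lemma redp_in_Mbar:
  fixes m :: "('k^4) set \<Rightarrow> int"
  assumes "m \<in> RL 2" "\<And>z. z \<in> Lr 2 \<Longrightarrow> int p ^ i dvd eta m z"
  shows "redp m \<in> Mbar p i"
proof -
  have "int p ^ i dvd eta m z" for z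
    using assms(2)[of z] eta_outside[of z m] by (cases "z \<in> Lr 2") auto
  then show ?thesis
    using assms(1) by (auto simp: Mbar_def M_def)
qed

lemma line_one_subset_Mbar:
  assumes "i \<le> 4"
  shows "(line_one :: (('k^4) set \<Rightarrow> 'k) set) \<subseteq> Mbar p i"
proof
  fix g :: "('k^4) set \<Rightarrow> 'k" assume "g \<in> line_one"
  then obtain c where g: "g = (\<lambda>x. c * one x)" by (auto simp: line_one_def)
  let ?m = "\<lambda>x :: ('k^4) set. int_lift c * one_int x"
  have "int p ^ i dvd eta ?m z" if "z \<in> Lr 2" for z
    using assms eta_one_int[OF that] by (simp add: eta_cmult le_imp_power_dvd)
  then have "redp ?m \<in> Mbar p i"
    by (intro redp_in_Mbar) (auto simp: RL_def one_int_def)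
  moreover have "redp ?m = g"
    using redp_one_int by (auto simp: g redp_def fun_eq_iff)
  ultimately show "g \<in> Mbar p i" by simp
qed

lemma ker_etabar_subset_Mbar: "(ker_etabar :: (('k^4) set \<Rightarrow> 'k) set) \<subseteq> Mbar p 1"
proof
  fix v :: "('k^4) set \<Rightarrow> 'k" assume "v \<in> ker_etabar"
  then have v: "v \<in> RL 2" "\<And>y. eta v y = 0" by (auto simp: ker_etabar_def)
  let ?m = "\<lambda>x. int_lift (v x)"
  have "redp (eta ?m) z = 0" for z
    using v(2) by (simp add: redp_eta redp_int_lift)
  then have "int p dvd eta ?m z" for z
    by (simp add: redp_def of_int_eq_0_iff_dvd)
  then have "redp ?m \<in> Mbar p 1"
    using int_lift_RL[OF v(1)] by (intro redp_in_Mbar) auto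
  then show "v \<in> Mbar p 1"
    by (simp add: redp_int_lift)
qed

lemma im_phibar_subset_Mbar: "(im_phibar :: (('k^4) set \<Rightarrow> 'k) set) \<subseteq> Mbar p 2"
proof
  fix g :: "('k^4) set \<Rightarrow> 'k" assume "g \<in> im_phibar"
  then obtain a where a: "a \<in> RL 1" and g: "g = phi a" by (auto simp: im_phibar_def)
  let ?a = "\<lambda>x. int_lift (a x)"
  have "int p ^ 2 dvd eta (phi ?a) z" if z: "z \<in> Lr 2" for z :: "('k^4) set"
  proof -
    have "int p ^ 2 dvd int (card {y \<in> Lr 2. y \<inter> z = {0} \<and> x \<inter> y = {0}})" if "x \<in> Lr 1" for x
      using card_planes_avoiding_plane_and_line[OF finite_prime_field that z] card_p
      by (simp add: le_imp_power_dvd)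
    then show ?thesis
      using z by (simp add: eta_at_plane sum_phi[OF finite_prime_field] dvd_sum)
  qed
  then have "redp (phi ?a) \<in> Mbar p 2"
    by (intro redp_in_Mbar) (auto simp: RL_def phi_def)
  then show "g \<in> Mbar p 2"
    by (simp add: g redp_phi redp_int_lift)
qed

lemma im_psibar_subset_Mbar: "(im_psibar :: (('k^4) set \<Rightarrow> 'k) set) \<subseteq> Mbar p 2"
proof
  fix g :: "('k^4) set \<Rightarrow> 'k" assume "g \<in> im_psibar"
  then obtain b where b: "b \<in> RL 3" and g: "g = psi b" by (auto simp: im_psibar_def)
  let ?b = "\<lambda>x. int_lift (b x)"
  have "int p ^ 2 dvd eta (psi ?b) z" if z: "z \<in> Lr 2" for z :: "('k^4) set"
  proof -
    have "int p ^ 2 dvd int (card {y \<in> Lr 2. y \<inter> z = {0} \<and> h \<inter> y \<noteq> y})" if "h \<in> Lr 3" for h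
      using card_planes_avoiding_plane_off_hyperplane[OF finite_prime_field that z] card_p
      by (simp add: le_imp_power_dvd)
    then show ?thesis
      using z by (simp add: eta_at_plane sum_psi[OF finite_prime_field] dvd_sum)
  qed
  then have "redp (psi ?b) \<in> Mbar p 2"
    by (intro redp_in_Mbar) (auto simp: RL_def psi_def)
  then show "g \<in> Mbar p 2"
    by (simp add: g redp_psi redp_int_lift)
qed

lemma im_etabar_subset_Mbar: "(im_etabar :: (('k^4) set \<Rightarrow> 'k) set) \<subseteq> Mbar p 3"
proof
  fix g :: "('k^4) set \<Rightarrow> 'k" assume "g \<in> im_etabar"
  then obtain v where v: "v \<in> RL 2" and g: "g = eta v" by (auto simp: im_etabar_def)
  define K where "K = int p * (int p - 1) * (int p ^ 2 - 1)"
  let ?v = "\<lambda>x. int_lift (v x)"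
  let ?m = "\<lambda>x. eta ?v x - K * ?v x"
  have "int p ^ 3 dvd eta ?m z" if z: "z \<in> Lr 2" for z :: "('k^4) set"
  proof -
    have "eta ?v z = (\<Sum>x\<in>Lr 2. ?v x * (if x \<inter> z = {0} then 1 else 0))"
      using z by (simp add: eta_def sum.inter_filter[OF finite_Lr[OF finite_prime_field]] if_distrib cong: if_cong)
    then have "eta ?m z = (\<Sum>x\<in>Lr 2. ?v x * (int (card {y \<in> Lr 2. y \<inter> z = {0} \<and> x \<inter> y = {0}})
        - K * (if x \<inter> z = {0} then 1 else 0)))"
      using z by (simp add: eta_diff eta_cmult eta_at_plane[of z "eta _"] sum_eta[OF finite_prime_field]
          sum_distrib_left sum_subtractf algebra_simps)
    moreover have "int p ^ 3 dvd int (card {y \<in> Lr 2. y \<inter> z = {0} \<and> x \<inter> y = {0}})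
        - K * (if x \<inter> z = {0} then 1 else 0)" if "x \<in> Lr 2" for x
      using card_planes_avoiding_two_planes_mod[OF finite_prime_field that z] card_p by (simp add: K_def)
    ultimately show ?thesis
      by (simp add: dvd_sum)
  qed
  then have "redp ?m \<in> Mbar p 3"
    using int_lift_RL[OF v] by (intro redp_in_Mbar) (auto simp: RL_def eta_def)
  moreover have "(of_int K :: 'k) = 0"
    unfolding of_int_eq_0_iff_dvd K_def by simp
  then have "redp ?m = redp (eta ?v)"
    by (simp add: redp_def)
  then have "redp ?m = g"
    by (simp add: g redp_eta redp_int_lift)
  ultimately show "g \<in> Mbar p 3" by simp
qed

lemma sum_scaled_one: "(\<Sum>y\<in>Lr 2. c * one y) = (c :: 'k)"
proof -
  have "(of_nat (card (Lr 2 :: ('k^4) set set)) :: 'k) = of_int ((int p ^ 2 + 1) * (int p ^ 2 + int p + 1))"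
    using card_Lr2[OF finite_prime_field] card_p by (metis of_int_of_nat_eq)
  also have "\<dots> = 1"
    using of_nat_eq_0_iff_dvd[of p] by simp
  finally show ?thesis
    by (simp add: one_def)
qed

lemma sum_phi_eq_0: "(\<Sum>y\<in>Lr 2. phi a y) = (0 :: 'k)"
  for a :: "('k^4) set \<Rightarrow> 'k"
proof -
  have "(of_nat (card {y \<in> Lr 2. x \<inter> y = {0}}) :: 'k) = 0" if "x \<in> Lr 1" for x :: "('k^4) set"
    using card_planes_disjoint_line[OF finite_prime_field that] card_p
    by (intro of_nat_eq_0_if_multiple[where c = "int p * (int p ^ 2 + int p + 1)"])
      (simp add: Int_commute power2_eq_square)
  then show ?thesis
    by (simp add: sum_phi[OF finite_prime_field])
qed

lemma sum_psi_eq_0: "(\<Sum>y\<in>Lr 2. psi b y) = (0 :: 'k)"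
  for b :: "('k^4) set \<Rightarrow> 'k"
proof -
  have "(of_nat (card {y \<in> Lr 2. h \<inter> y \<noteq> y}) :: 'k) = 0" if "h \<in> Lr 3" for h :: "('k^4) set"
    using card_planes_not_in_hyperplane[OF finite_prime_field that] card_p
    by (intro of_nat_eq_0_if_multiple[where c = "int p * (int p ^ 2 + int p + 1)"])
      (simp add: power2_eq_square)
  then show ?thesis
    by (simp add: sum_psi[OF finite_prime_field])
qed

lemma sum_eta_eq_0: "(\<Sum>y\<in>Lr 2. eta v y) = (0 :: 'k)"
  for v :: "('k^4) set \<Rightarrow> 'k"
proof -
  have "(of_nat (card {y \<in> Lr 2. x \<inter> y = {0}}) :: 'k) = 0" if "x \<in> Lr 2" for x :: "('k^4) set"
    using card_planes_disjoint_plane[OF finite_prime_field that] card_p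
    by (intro of_nat_eq_0_if_multiple[where c = "int p ^ 3"]) (simp add: Int_commute power_numeral_reduce)
  then show ?thesis
    by (simp add: sum_eta[OF finite_prime_field])
qed

lemma line_one_Int_eq_zero:
  assumes "\<And>f. f \<in> U \<Longrightarrow> (\<Sum>y\<in>Lr 2. f y) = 0" "(\<lambda>x. 0) \<in> U"
  shows "(line_one :: (('k^4) set \<Rightarrow> 'k) set) \<inter> U = {\<lambda>x. 0}"
proof -
  have "f = (\<lambda>x. 0)" if "f \<in> line_one" and fU: "f \<in> U" for f :: "('k^4) set \<Rightarrow> 'k"
  proof -
    obtain c where f: "f = (\<lambda>x. c * one x)"
      using \<open>f \<in> line_one\<close> by (auto simp: line_one_def)
    then have "c = 0" using assms(1)[OF fU] sum_scaled_one[of c] by simp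
    then show ?thesis using f by simp
  qed
  moreover have "(\<lambda>x. 0) \<in> (line_one :: (('k^4) set \<Rightarrow> 'k) set)"
    by (auto simp: line_one_def intro!: exI[of _ 0])
  ultimately show ?thesis using assms(2) by blast
qed

end

theorem lemma3:
  fixes p :: nat
  assumes "prime p" and "CARD('k::field) = p"
  shows "(ker_etabar :: (('k^4) set \<Rightarrow> 'k) set) \<subseteq> Mbar p 1
    \<and> ((line_one :: (('k^4) set \<Rightarrow> 'k) set) \<inter> setsum im_phibar im_psibar = {\<lambda>x. 0}
       \<and> setsum (line_one :: (('k^4) set \<Rightarrow> 'k) set) (setsum im_phibar im_psibar) \<subseteq> Mbar p 2)
    \<and> ((line_one :: (('k^4) set \<Rightarrow> 'k) set) \<inter> im_etabar = {\<lambda>x. 0}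
       \<and> setsum (line_one :: (('k^4) set \<Rightarrow> 'k) set) im_etabar \<subseteq> Mbar p 3)
    \<and> (line_one :: (('k^4) set \<Rightarrow> 'k) set) \<subseteq> Mbar p 4"
proof -
  have zero_in_images: "(\<lambda>x. 0) \<in> (im_phibar :: (('k^4) set \<Rightarrow> 'k) set)"
      "(\<lambda>x. 0) \<in> (im_psibar :: (('k^4) set \<Rightarrow> 'k) set)" "(\<lambda>x. 0) \<in> (im_etabar :: (('k^4) set \<Rightarrow> 'k) set)"
    by (auto simp: im_phibar_def im_psibar_def im_etabar_def RL_def image_iff fun_eq_iff phi_def psi_def eta_def
        intro!: exI[of _ "\<lambda>x. 0"])
  have "(line_one :: (('k^4) set \<Rightarrow> 'k) set) \<inter> setsum im_phibar im_psibar = {\<lambda>x. 0}"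
  proof (rule line_one_Int_eq_zero[OF assms])
    show "(\<Sum>y\<in>Lr 2. f y) = 0" if "f \<in> setsum im_phibar im_psibar" for f :: "('k^4) set \<Rightarrow> 'k"
      using that sum_phi_eq_0[OF assms] sum_psi_eq_0[OF assms]
      by (auto simp: setsum_def im_phibar_def im_psibar_def sum.distrib)
    show "(\<lambda>x. 0) \<in> (setsum im_phibar im_psibar :: (('k^4) set \<Rightarrow> 'k) set)"
      unfolding setsum_def using zero_in_images by (intro CollectI exI[of _ "\<lambda>x. 0"]) auto
  qed
  moreover have "(line_one :: (('k^4) set \<Rightarrow> 'k) set) \<inter> im_etabar = {\<lambda>x. 0}"
    using sum_eta_eq_0[OF assms] zero_in_images
    by (intro line_one_Int_eq_zero[OF assms]) (auto simp: im_etabar_def)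
  ultimately show ?thesis
    using ker_etabar_subset_Mbar[OF assms] line_one_subset_Mbar[OF assms]
      im_phibar_subset_Mbar[OF assms] im_psibar_subset_Mbar[OF assms] im_etabar_subset_Mbar[OF assms]
    by (simp add: setsum_subset_Mbar)
qed

end
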